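(* Let $n\ge 3$ and let $A$ be the matrix obtained from $V_n$ by replacing the entries $a_{ij}$ for a nonempty set of positions $(i,j)$ with $2\le i\le j\le n-1$ by $t$. Viewing $\det A$ as a polynomial in the indeterminates $s$ and $t$, the coefficient of the monomial $s^{n-3}t^3$ in $\det A$ is nonzero.
   Context: $V_n$ is the $n\times n$ matrix $(a_{ij})$ with: $a_{1j}=t$ for $1\le j\le n-1$ and $a_{1n}=0$; $a_{i+1,i}=s$ for $1\le i\le n-1$; $a_{ij}=0$ for $i>j+1$; $a_{ij}=0$ for $2\le i\le j\le n-1$; and $a_{in}=t$ for $2\le i\le n$. Every entry of $V_n$ and of $A$ is $0$, $s$ or $t$, so $\det A$ is a polynomial in $s,t$ with integer coefficients. *)

theory Defs
  imports "Jordan_Normal_Form.Determinant" "HOL-Computational_Algebra.Polynomial"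
begin

definition V_entry :: "nat \<Rightarrow> 'a \<Rightarrow> 'a \<Rightarrow> nat \<Rightarrow> nat \<Rightarrow> 'a::zero" where
  "V_entry n s t i j =
     (if i = 1 then (if j \<le> n - 1 then t else 0)
      else if j = n then t
      else if i = j + 1 then s
      else 0)"

text \<open>The matrix V_n (Jordan_Normal_Form matrices are 0-indexed, so shift by one).\<close>
definition V_mat :: "nat \<Rightarrow> 'a \<Rightarrow> 'a \<Rightarrow> 'a::zero mat" where
  "V_mat n s t = mat n n (\<lambda>(i, j). V_entry n s t (i + 1) (j + 1))"

definition A_mat :: "nat \<Rightarrow> 'a \<Rightarrow> 'a \<Rightarrow> (nat \<times> nat) set \<Rightarrow> 'a::zero mat" where
  "A_mat n s t P = mat n n (\<lambda>(i, j). if (i + 1, j + 1) \<in> P then t else V_mat n s t $$ (i, j))"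

text \<open>Indeterminates: bivariate integer polynomials are modelled as int poly poly;
  s is the inner variable, t the outer variable.\<close>
definition var_s :: "int poly poly" where "var_s = [:[:0, 1:]:]"
definition var_t :: "int poly poly" where "var_t = [:0, 1:]"

end

theory Submission
  imports Defs
begin

text \<open>Every nonzero entry of A is s or t, so a permutation p contributes to the coefficient
  of s^(n-3) t^3 in det A exactly when it avoids the zero entries and picks t in exactly
  three rows. Row 0 always picks t, and a row i > 0 picks s only in column i - 1. Hence p
  leaves the subdiagonal in exactly two rows a < b, and injectivity forces p b = n - 1,
  p a = b - 1, p 0 = a - 1, where (a + 1, b) must lie in P. These permutations thus
  correspond bijectively to P; each is a cyclic shift composed with two transpositions, so
  all have the same sign and the coefficient is \<plusminus>|P|.\<close>

lemma coeff_var_t_pow_var_s_pow: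
  "coeff (coeff (var_t ^ b * var_s ^ a) k) m = (if b = k \<and> a = m then 1 else 0)"
proof -
  have "var_t ^ b = monom 1 b"
    unfolding var_t_def by (simp add: monom_altdef)
  moreover have "var_s ^ a = [:monom 1 a:]"
    unfolding var_s_def by (simp add: monom_altdef poly_const_pow)
  ultimately show ?thesis
    by (simp add: coeff_monom)
qed

lemma prod_three_valued:
  fixes f :: "'b \<Rightarrow> 'a::comm_semiring_1"
  assumes "finite I" and "\<And>i. i \<in> I \<Longrightarrow> f i = (if T i then a else if S i then b else 0)"
  shows "prod f I = (if \<forall>i\<in>I. T i \<or> S i
    then a ^ card {i\<in>I. T i} * b ^ (card I - card {i\<in>I. T i}) else 0)"
proof (cases "\<forall>i\<in>I. T i \<or> S i")
  case True
  then have "prod f I = (\<Prod>i\<in>I. if T i then a else b)"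
    using assms(2) by (intro prod.cong) auto
  also have "\<dots> = a ^ card (I \<inter> {i. T i}) * b ^ card (I - {i. T i})"
    by (simp add: prod.If_cases[OF assms(1)] Diff_eq)
  also have "\<dots> = a ^ card {i\<in>I. T i} * b ^ (card I - card {i\<in>I. T i})"
    using assms(1) by (simp add: card_Diff_subset_Int Int_def conj_commute)
  finally show ?thesis
    using True by simp
next
  case False
  then obtain i where "i \<in> I" "\<not> T i" "\<not> S i"
    by auto
  then have "prod f I = 0"
    using assms by (metis prod_zero)
  then show ?thesis
    by (simp only: if_not_P[OF False])
qed

text \<open>Positions (i, j) are 0-based, as in mat, whereas P holds 1-based positions.\<close>

definition t_pos :: "nat \<Rightarrow> (nat \<times> nat) set \<Rightarrow> nat \<Rightarrow> nat \<Rightarrow> bool" where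
  "t_pos n P i j \<longleftrightarrow> (i = 0 \<and> j \<le> n - 2) \<or> (0 < i \<and> j = n - 1) \<or> (i + 1, j + 1) \<in> P"

definition s_pos :: "nat \<Rightarrow> nat \<Rightarrow> bool" where
  "s_pos i j \<longleftrightarrow> 0 < i \<and> i = j + 1"

lemma A_mat_entry:
  assumes "i < n" "j < n" "2 \<le> n"
  shows "A_mat n s t P $$ (i, j) = (if t_pos n P i j then t else if s_pos i j then s else 0)"
  using assms unfolding A_mat_def V_mat_def V_entry_def t_pos_def s_pos_def by auto

definition on_support :: "nat \<Rightarrow> (nat \<times> nat) set \<Rightarrow> (nat \<Rightarrow> nat) \<Rightarrow> bool" where
  "on_support n P p \<longleftrightarrow> (\<forall>i\<in>{0..<n}. t_pos n P i (p i) \<or> s_pos i (p i))"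

definition t_rows :: "nat \<Rightarrow> (nat \<times> nat) set \<Rightarrow> (nat \<Rightarrow> nat) \<Rightarrow> nat set" where
  "t_rows n P p = {i\<in>{0..<n}. t_pos n P i (p i)}"

lemma coeff_prod_A_mat:
  assumes "2 \<le> n" and "p permutes {0..<n}"
  shows "coeff (coeff (\<Prod>i=0..<n. A_mat n var_s var_t P $$ (i, p i)) k) (n - k) =
    (if on_support n P p \<and> card (t_rows n P p) = k then 1 else 0)"
proof -
  have entry: "A_mat n var_s var_t P $$ (i, p i) =
      (if t_pos n P i (p i) then var_t else if s_pos i (p i) then var_s else 0)"
    if "i \<in> {0..<n}" for i
    using that permutes_in_image[OF assms(2)] by (intro A_mat_entry[OF _ _ assms(1)]) auto
  have "(\<Prod>i=0..<n. A_mat n var_s var_t P $$ (i, p i)) = (if on_support n P p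
      then var_t ^ card (t_rows n P p) * var_s ^ (n - card (t_rows n P p)) else 0)"
    using prod_three_valued[where I = "{0..<n}" and T = "\<lambda>i. t_pos n P i (p i)"
        and S = "\<lambda>i. s_pos i (p i)", OF finite_atLeastLessThan entry]
    by (simp only: on_support_def t_rows_def card_atLeastLessThan diff_zero)
  moreover have "card (t_rows n P p) \<le> card {0..<n}"
    unfolding t_rows_def by (intro card_mono) auto
  ultimately show ?thesis
    by (auto simp: coeff_var_t_pow_var_s_pow)
qed

lemma coeff_det_A_mat:
  assumes "2 \<le> n"
  shows "coeff (coeff (det (A_mat n var_s var_t P)) k) (n - k) =
    (\<Sum>p | p permutes {0..<n} \<and> on_support n P p \<and> card (t_rows n P p) = k. sign p)"
proof -
  have "A_mat n var_s var_t P \<in> carrier_mat n n"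
    unfolding A_mat_def by simp
  then have "coeff (coeff (det (A_mat n var_s var_t P)) k) (n - k) =
      (\<Sum>p | p permutes {0..<n}. sign p *
        coeff (coeff (\<Prod>i=0..<n. A_mat n var_s var_t P $$ (i, p i)) k) (n - k))"
    by (simp add: det_def' coeff_sum of_int_poly)
  also have "\<dots> =
      (\<Sum>p | p permutes {0..<n}. if on_support n P p \<and> card (t_rows n P p) = k then sign p else 0)"
    by (intro sum.cong) (simp_all add: coeff_prod_A_mat[OF assms])
  also have "\<dots> = (\<Sum>p | p permutes {0..<n} \<and> on_support n P p \<and> card (t_rows n P p) = k. sign p)"
    by (simp add: sum.inter_filter[symmetric] finite_permutations conj_assoc)
  finally show ?thesis .
qed

definition shift_down :: "nat \<Rightarrow> nat \<Rightarrow> nat" where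
  "shift_down n i = (if i = 0 then n - 1 else if i < n then i - 1 else i)"

lemma shift_down_permutes: "shift_down n permutes {0..<n}"
proof (rule bij_imp_permutes)
  show "bij_betw (shift_down n) {0..<n} {0..<n}"
    by (rule bij_betw_byWitness[where f' = "\<lambda>i. if i = n - 1 then 0 else i + 1"])
      (auto simp: shift_down_def)
  show "shift_down n i = i" if "i \<notin> {0..<n}" for i
    using that by (simp add: shift_down_def)
qed

text \<open>For a 1-based position (x, y) of P: the permutation picking t at (0, x - 2), at
  (x - 1, y - 1), i.e. at (x, y) itself, and at (y, n - 1), and s in every other row.\<close>

definition perm_through :: "nat \<Rightarrow> nat \<Rightarrow> nat \<Rightarrow> nat \<Rightarrow> nat" where
  "perm_through n x y = shift_down n \<circ> transpose 0 (x - 1) \<circ> transpose (x - 1) y"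

lemma perm_through_apply:
  assumes "2 \<le> x" "x \<le> y" "y < n"
  shows "perm_through n x y i = (if i = 0 then x - 2 else if i = x - 1 then y - 1
    else if i = y then n - 1 else shift_down n i)"
  using assms by (auto simp: perm_through_def shift_down_def transpose_def)

lemma perm_through_permutes:
  assumes "2 \<le> x" "x \<le> y" "y < n"
  shows "perm_through n x y permutes {0..<n}"
  unfolding perm_through_def using assms
  by (intro permutes_compose permutes_swap_id shift_down_permutes) auto

lemma sign_perm_through:
  assumes "2 \<le> x" "x \<le> y"
  shows "sign (perm_through n x y) = sign (shift_down n)"
proof -
  have "permutation (shift_down n)"
    using permutes_imp_permutation[OF _ shift_down_permutes] by simp
  then show ?thesis
    using assms by (simp add: perm_through_def sign_compose permutation_compose
        permutation_swap_id sign_swap_id)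
qed

lemma inj_on_perm_through:
  assumes "P \<subseteq> {(i, j). 2 \<le> i \<and> i \<le> j \<and> j \<le> n - 1}"
  shows "inj_on (\<lambda>(x, y). perm_through n x y) P"
proof (rule inj_onI, clarsimp)
  fix x y x' y'
  assume "(x, y) \<in> P" "(x', y') \<in> P" and eq: "perm_through n x y = perm_through n x' y'"
  then have bounds: "2 \<le> x" "x \<le> y" "y < n" "2 \<le> x'" "x' \<le> y'" "y' < n"
    using assms by auto
  have "x = x'"
    using fun_cong[OF eq, of 0] bounds by (simp add: perm_through_apply)
  moreover have "y = y'"
    using fun_cong[OF eq, of "x - 1"] bounds calculation by (simp add: perm_through_apply)
  ultimately show "x = x' \<and> y = y'" ..
qed

lemma t_rows_perm_through:
  assumes P: "P \<subseteq> {(i, j). 2 \<le> i \<and> i \<le> j \<and> j \<le> n - 1}" and xy: "(x, y) \<in> P"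
  shows "on_support n P (perm_through n x y)"
    and "t_rows n P (perm_through n x y) = {0, x - 1, y}"
proof -
  have bounds: "2 \<le> x" "x \<le> y" "y < n"
    using P xy by auto
  have below_diag: "(i + 1, i) \<notin> P" for i
    using P by auto
  show "on_support n P (perm_through n x y)"
    using bounds xy unfolding on_support_def t_pos_def s_pos_def
    by (auto simp: perm_through_apply shift_down_def)
  have "i < n \<and> t_pos n P i (perm_through n x y i) \<longleftrightarrow> i = 0 \<or> i = x - 1 \<or> i = y" for i
    using bounds xy below_diag[of "i - 1"] below_diag[of i] unfolding t_pos_def
    by (auto simp: perm_through_apply shift_down_def)
  then show "t_rows n P (perm_through n x y) = {0, x - 1, y}"
    unfolding t_rows_def by auto
qed

lemma t_pos_row_le_col:
  assumes "P \<subseteq> {(i, j). 2 \<le> i \<and> i \<le> j \<and> j \<le> n - 1}" "0 < i" "i < n" "t_pos n P i j"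
  shows "i \<le> j"
  using assms unfolding t_pos_def by auto

lemma t_pos_row0:
  assumes "P \<subseteq> {(i, j). 2 \<le> i \<and> i \<le> j \<and> j \<le> n - 1}" "t_pos n P 0 j"
  shows "j \<le> n - 2"
  using assms unfolding t_pos_def by auto

lemma on_support_t_pos_iff:
  assumes "P \<subseteq> {(i, j). 2 \<le> i \<and> i \<le> j \<and> j \<le> n - 1}" "on_support n P p" "0 < i" "i < n"
  shows "t_pos n P i (p i) \<longleftrightarrow> p i \<noteq> i - 1"
proof
  assume "t_pos n P i (p i)"
  then have "i \<le> p i"
    by (rule t_pos_row_le_col[OF assms(1,3,4)])
  then show "p i \<noteq> i - 1"
    using assms(3) by linarith
next
  assume "p i \<noteq> i - 1"
  then show "t_pos n P i (p i)"
    using assms unfolding on_support_def s_pos_def by auto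
qed

lemma on_support_three_t_rows:
  assumes P: "P \<subseteq> {(i, j). 2 \<le> i \<and> i \<le> j \<and> j \<le> n - 1}"
    and supp: "on_support n P p" and three: "card (t_rows n P p) = 3"
  obtains a b where "0 < a" "a < b" "b < n" "t_rows n P p = {0, a, b}"
    and "\<And>i. 0 < i \<Longrightarrow> i < n \<Longrightarrow> i \<noteq> a \<Longrightarrow> i \<noteq> b \<Longrightarrow> p i = i - 1"
proof -
  define R where "R = {i\<in>{1..<n}. p i \<noteq> i - 1}"
  have "0 < n"
    using three by (intro Nat.gr0I) (simp add: t_rows_def)
  then have "0 \<in> t_rows n P p"
    using supp unfolding on_support_def t_rows_def s_pos_def by auto
  moreover have rows: "t_rows n P p - {0} = R"
    using on_support_t_pos_iff[OF P supp] unfolding t_rows_def R_def by auto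
  ultimately have "card R = 2"
    using three card_Diff_singleton[of 0 "t_rows n P p"] by simp
  then obtain x y where "R = {x, y}" "x \<noteq> y"
    by (auto simp: card_2_iff)
  then obtain a b where ab: "R = {a, b}" "a < b"
    by (metis insert_commute linorder_neq_iff)
  have "a \<in> R" "b \<in> R"
    using ab(1) by simp_all
  show thesis
  proof (rule that)
    show "0 < a" "b < n"
      using \<open>a \<in> R\<close> \<open>b \<in> R\<close> unfolding R_def by simp_all
    show "a < b"
      by (rule ab(2))
    show "t_rows n P p = {0, a, b}"
      using insert_Diff[OF \<open>0 \<in> t_rows n P p\<close>] rows ab(1) by simp
    show "p i = i - 1" if "0 < i" "i < n" "i \<noteq> a" "i \<noteq> b" for i
    proof -
      have "i \<notin> R"
        using that ab(1) by simp
      then show ?thesis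
        using that unfolding R_def by simp
    qed
  qed
qed

lemma three_t_rows_imp_perm_through:
  assumes P: "P \<subseteq> {(i, j). 2 \<le> i \<and> i \<le> j \<and> j \<le> n - 1}" and p: "p permutes {0..<n}"
    and supp: "on_support n P p" and three: "card (t_rows n P p) = 3"
  shows "\<exists>(x, y)\<in>P. p = perm_through n x y"
proof -
  obtain a b where ab: "0 < a" "a < b" "b < n" and rows: "t_rows n P p = {0, a, b}"
    and subdiag: "\<And>i. 0 < i \<Longrightarrow> i < n \<Longrightarrow> i \<noteq> a \<Longrightarrow> i \<noteq> b \<Longrightarrow> p i = i - 1"
    using on_support_three_t_rows[OF P supp three] by blast
  have t_a: "t_pos n P a (p a)" and "t_pos n P b (p b)" and "t_pos n P 0 (p 0)"
    using rows unfolding t_rows_def by blast+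
  then have "a \<le> p a" "b \<le> p b" "p 0 \<le> n - 2"
    using ab by (auto intro: t_pos_row_le_col[OF P] t_pos_row0[OF P])
  have p_lt: "p i < n" if "i < n" for i
    using permutes_in_image[OF p] that by simp
  have p_inj: "i = j" if "p i = p j" for i j
    using permutes_inj[OF p] that by (simp add: inj_eq)
  \<comment> \<open>a value c < n - 1 of p is taken at row c + 1 unless c + 1 is one of the rows a, b\<close>
  have preimage: "p r + 1 = a \<or> p r + 1 = b \<or> r = p r + 1" if "p r + 1 < n" for r
  proof (rule ccontr)
    assume not_ab: "\<not> ?thesis"
    then have "p (p r + 1) = p r"
      using subdiag[of "p r + 1"] that by simp
    then show False
      using p_inj[of "p r + 1" r] not_ab by simp
  qed
  have pb: "p b = n - 1"
    using preimage[of b] p_lt[of b] \<open>b \<le> p b\<close> ab by fastforce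
  have pa: "p a = b - 1"
    using preimage[of a] p_lt[of a] p_inj[of a b] pb \<open>a \<le> p a\<close> ab by fastforce
  have p0: "p 0 = a - 1"
    using preimage[of 0] p_inj[of 0 a] pa \<open>p 0 \<le> n - 2\<close> ab by fastforce
  have "(a + 1, b) \<in> P"
    using t_a pa ab unfolding t_pos_def by auto
  moreover have "p = perm_through n (a + 1) b"
  proof
    fix i
    show "p i = perm_through n (a + 1) b i"
    proof (cases "i < n")
      case True
      then show ?thesis
        using p0 pa pb subdiag[of i] ab by (auto simp: perm_through_apply shift_down_def)
    next
      case False
      then show ?thesis
        using permutes_not_in[OF p] ab by (auto simp: perm_through_apply shift_down_def)
    qed
  qed
  ultimately show ?thesis
    by blast
qed

lemma three_t_rows_perms_eq:
  assumes P: "P \<subseteq> {(i, j). 2 \<le> i \<and> i \<le> j \<and> j \<le> n - 1}"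
  shows "{p. p permutes {0..<n} \<and> on_support n P p \<and> card (t_rows n P p) = 3} =
    (\<lambda>(x, y). perm_through n x y) ` P"
proof (intro equalityI subsetI)
  fix p
  assume "p \<in> {p. p permutes {0..<n} \<and> on_support n P p \<and> card (t_rows n P p) = 3}"
  then show "p \<in> (\<lambda>(x, y). perm_through n x y) ` P"
    using three_t_rows_imp_perm_through[OF P] by fastforce
next
  fix p
  assume "p \<in> (\<lambda>(x, y). perm_through n x y) ` P"
  then obtain x y where xy: "(x, y) \<in> P" and p: "p = perm_through n x y"
    by force
  have "2 \<le> x" "x \<le> y" "y < n"
    using P xy by auto
  then show "p \<in> {p. p permutes {0..<n} \<and> on_support n P p \<and> card (t_rows n P p) = 3}"
    using perm_through_permutes t_rows_perm_through[OF P xy] p by auto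
qed

theorem proposition5p7:
  fixes n :: nat and P :: "(nat \<times> nat) set"
  assumes "n \<ge> 3"
    and "P \<subseteq> {(i, j). 2 \<le> i \<and> i \<le> j \<and> j \<le> n - 1}"
    and "P \<noteq> {}"
  shows "coeff (coeff (det (A_mat n var_s var_t P)) 3) (n - 3) \<noteq> 0"
proof -
  have "finite P"
    using assms(2) by (rule finite_subset) (rule finite_subset[of _ "{..n} \<times> {..n}"], auto)
  have "coeff (coeff (det (A_mat n var_s var_t P)) 3) (n - 3) =
      (\<Sum>p\<in>(\<lambda>(x, y). perm_through n x y) ` P. sign p)"
    using coeff_det_A_mat[of n P 3] three_t_rows_perms_eq[OF assms(2)] assms(1) by simp
  also have "\<dots> = (\<Sum>q\<in>P. sign ((\<lambda>(x, y). perm_through n x y) q))"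
    by (rule sum.reindex[OF inj_on_perm_through[OF assms(2)], unfolded comp_def])
  also have "\<dots> = (\<Sum>q\<in>P. sign (shift_down n))"
    using assms(2) by (intro sum.cong) (auto simp: sign_perm_through)
  also have "\<dots> = int (card P) * sign (shift_down n)"
    by simp
  finally show ?thesis
    using \<open>finite P\<close> assms(3) by (simp add: sign_def)
qed

end
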